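(* Let $f_j(\Delta'_{n,k})$ denote the number of $j$-dimensional faces of the half-open hypersimplex $\Delta'_{n,k}$. Then, as formal power series, $$ \sum_{n\ge1}\sum_{k=1}^n\sum_{j=1}^n f_j(\Delta'_{n,k})\,x^k y^{n-k}t^j=\frac{(1-x)xt}{(1-x-y)(1-x-y-xt)(1-x-y-yt)}. $$
   Context: For integers $0<k\le n$, $\Delta_{n,k}=\{(x_1,\ldots,x_n)\in[0,1]^n : k-1\le x_1+\cdots+x_n\le k\}$ (a convex polytope) and the half-open hypersimplex is $\Delta'_{n,k}=\{(x_1,\ldots,x_n)\in[0,1]^n : k-1< x_1+\cdots+x_n\le k\}$. A $j$-face of $\Delta'_{n,k}$ is a set $F\cap\Delta'_{n,k}$ where $F$ is a $j$-dimensional face of $\Delta_{n,k}$ with $F\cap\Delta'_{n,k}\neq\emptyset$; $f_j(\Delta'_{n,k})$ is the number of such sets. *)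

theory Defs
  imports "HOL-Analysis.Analysis" "HOL-Library.Function_Algebras"
    "HOL-Computational_Algebra.Formal_Power_Series"
begin

text \<open>Points of R^n are represented as functions nat => real vanishing outside {0..<n}
  (coordinates x_1..x_n are x 0 .. x (n-1)).\<close>

definition pt_scale :: "real \<Rightarrow> (nat \<Rightarrow> real) \<Rightarrow> (nat \<Rightarrow> real)" where
  "pt_scale c x = (\<lambda>i. c * x i)"

lemma vector_space_pt: "vector_space pt_scale"
  by unfold_locales (auto simp: pt_scale_def fun_eq_iff algebra_simps)

definition hypersimplex :: "nat \<Rightarrow> nat \<Rightarrow> (nat \<Rightarrow> real) set" where
  "hypersimplex n k = {x. (\<forall>i<n. 0 \<le> x i \<and> x i \<le> 1) \<and> (\<forall>i\<ge>n. x i = 0) \<and>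
      real k - 1 \<le> (\<Sum>i<n. x i) \<and> (\<Sum>i<n. x i) \<le> real k}"

definition hypersimplex_ho :: "nat \<Rightarrow> nat \<Rightarrow> (nat \<Rightarrow> real) set" where
  "hypersimplex_ho n k = {x. (\<forall>i<n. 0 \<le> x i \<and> x i \<le> 1) \<and> (\<forall>i\<ge>n. x i = 0) \<and>
      real k - 1 < (\<Sum>i<n. x i) \<and> (\<Sum>i<n. x i) \<le> real k}"

definition closed_seg :: "(nat \<Rightarrow> real) \<Rightarrow> (nat \<Rightarrow> real) \<Rightarrow> (nat \<Rightarrow> real) set" where
  "closed_seg a b = {(\<lambda>i. (1 - u) * a i + u * b i) | u. 0 \<le> u \<and> u \<le> (1::real)}"

definition open_seg :: "(nat \<Rightarrow> real) \<Rightarrow> (nat \<Rightarrow> real) \<Rightarrow> (nat \<Rightarrow> real) set" where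
  "open_seg a b = closed_seg a b - {a, b}"

definition convex_pt :: "(nat \<Rightarrow> real) set \<Rightarrow> bool" where
  "convex_pt S \<longleftrightarrow> (\<forall>a\<in>S. \<forall>b\<in>S. closed_seg a b \<subseteq> S)"

definition is_face :: "(nat \<Rightarrow> real) set \<Rightarrow> (nat \<Rightarrow> real) set \<Rightarrow> bool" where
  "is_face F P \<longleftrightarrow> F \<subseteq> P \<and> convex_pt F \<and>
     (\<forall>a\<in>P. \<forall>b\<in>P. \<forall>x\<in>F. x \<in> open_seg a b \<longrightarrow> a \<in> F \<and> b \<in> F)"

definition aff_dim_pt :: "(nat \<Rightarrow> real) set \<Rightarrow> int" where
  "aff_dim_pt F = (if F = {} then -1 else int (vector_space.dim pt_scale {x - y | x y. x \<in> F \<and> y \<in> F}))"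

definition f_ho :: "nat \<Rightarrow> nat \<Rightarrow> nat \<Rightarrow> nat" where
  "f_ho j n k = card {G. \<exists>F. is_face F (hypersimplex n k) \<and> aff_dim_pt F = int j \<and>
      G = F \<inter> hypersimplex_ho n k \<and> G \<noteq> {}}"

text \<open>Three-variable formal power series as nested fps: outer variable x, middle y, inner t.\<close>
definition fps_x :: "int fps fps fps" where "fps_x = fps_X"
definition fps_y :: "int fps fps fps" where "fps_y = fps_const fps_X"
definition fps_t :: "int fps fps fps" where "fps_t = fps_const (fps_const fps_X)"

text \<open>The generating series sum_{n>=1} sum_{k=1}^n sum_{j=1}^n f_j x^k y^(n-k) t^j,
  written coefficientwise: coefficient of x^k y^m t^j is f_j(Delta'_{k+m,k}).\<close>
definition face_gf :: "int fps fps fps" where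
  "face_gf = Abs_fps (\<lambda>k. Abs_fps (\<lambda>m. Abs_fps (\<lambda>j.
      if 1 \<le> k \<and> 1 \<le> j \<and> j \<le> k + m then int (f_ho j (k + m) k) else 0)))"

end

theory Submission
  imports Defs
begin

text \<open>A face of the hypersimplex is cut out by the inequalities that are tight at a
  relative-interior point \<open>z\<close>, and it meets the half-open hypersimplex exactly when
  \<open>z\<^sub>1 + \<dots> + z\<^sub>n > k - 1\<close>. Such a face is determined by the type \<open>(B, C, u)\<close> of \<open>z\<close>:
  the coordinates equal to 1, the fractional coordinates, and whether the coordinate sum is \<open>k\<close>;
  its dimension is \<open>|C|\<close> or \<open>|C| - 1\<close> accordingly. Counting types gives
  \<open>f\<^sub>j(\<Delta>'\<^sub>n\<^sub>,\<^sub>k) = \<Sum>\<^sub>b C(n, j) C(n - j, b) + C(n, j + 1) C(n - j - 1, b)\<close>, summed over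
  \<open>k - j \<le> b \<le> k - 1\<close>; these are sums of trinomial coefficients. Multiplying the generating
  function by the three denominator factors one at a time, the Pascal recurrence of the
  trinomial coefficients makes every multiplication telescope.\<close>

section \<open>Trinomial coefficients\<close>

definition trinomial :: "nat \<Rightarrow> nat \<Rightarrow> nat \<Rightarrow> nat" where
  "trinomial a b c = ((a + b + c) choose c) * ((a + b) choose b)"

lemma trinomial_fact: "real (trinomial a b c) = fact (a + b + c) / (fact a * fact b * fact c)"
proof -
  have 1: "real ((a + b + c) choose c) = fact (a + b + c) / (fact c * fact (a + b))"
    using binomial_fact[of c "a + b + c", where 'a = real] by simp
  have 2: "real ((a + b) choose b) = fact (a + b) / (fact b * fact a)"
    using binomial_fact[of b "a + b", where 'a = real] by simp
  show ?thesis
    unfolding trinomial_def of_nat_mult 1 2 by (simp add: field_simps)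
qed

lemma trinomial_commute: "trinomial a b c = trinomial b a c" "trinomial a b c = trinomial c b a"
  by (simp_all only: of_nat_eq_iff[where 'a = real, symmetric] trinomial_fact ac_simps)

lemma Suc_times_trinomial: "Suc a * trinomial (Suc a) b c = Suc (a + b + c) * trinomial a b c"
proof -
  have "real (Suc a * trinomial (Suc a) b c)
      = real (Suc a) * (real (Suc (a + b + c)) * fact (a + b + c))
        / (real (Suc a) * (fact a * fact b * fact c))"
    unfolding of_nat_mult[of "Suc a"] trinomial_fact by (simp add: mult.assoc del: of_nat_Suc)
  also have "\<dots> = real (Suc (a + b + c) * trinomial a b c)"
    unfolding nonzero_mult_divide_mult_cancel_left[OF of_nat_neq_0] of_nat_mult trinomial_fact
    by simp
  finally show ?thesis
    by (simp only: of_nat_eq_iff)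
qed

definition trinomial_int :: "int \<Rightarrow> int \<Rightarrow> int \<Rightarrow> int" where
  "trinomial_int a b c =
     (if a < 0 \<or> b < 0 \<or> c < 0 then 0 else int (trinomial (nat a) (nat b) (nat c)))"

lemma trinomial_int_commute:
  "trinomial_int a b c = trinomial_int b a c" "trinomial_int a b c = trinomial_int c b a"
  unfolding trinomial_int_def
  using trinomial_commute[of "nat a" "nat b" "nat c"] by auto

lemma trinomial_int_pred_first:
  assumes "0 \<le> a" "0 \<le> b" "0 \<le> c"
  shows "(a + b + c) * trinomial_int (a - 1) b c = a * trinomial_int a b c"
proof (cases "a = 0")
  case True
  then show ?thesis by (simp add: trinomial_int_def)
next
  case False
  define a' where "a' = nat (a - 1)"
  have a: "a = int (Suc a')"
    using assms(1) False by (simp add: a'_def)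
  have "(a + b + c) * trinomial_int (a - 1) b c
      = int (Suc (a' + nat b + nat c) * trinomial a' (nat b) (nat c))"
    using assms by (simp add: a trinomial_int_def algebra_simps)
  also have "\<dots> = int (Suc a' * trinomial (Suc a') (nat b) (nat c))"
    by (simp only: Suc_times_trinomial)
  also have "\<dots> = a * trinomial_int a b c"
    using assms unfolding a by (simp add: trinomial_int_def del: of_nat_Suc mult_Suc)
  finally show ?thesis .
qed

lemma trinomial_int_pred:
  assumes "0 \<le> a" "0 \<le> b" "0 \<le> c"
  shows "(a + b + c) * trinomial_int (a - 1) b c = a * trinomial_int a b c"
    and "(a + b + c) * trinomial_int a (b - 1) c = b * trinomial_int a b c"
    and "(a + b + c) * trinomial_int a b (c - 1) = c * trinomial_int a b c"
proof -
  show "(a + b + c) * trinomial_int (a - 1) b c = a * trinomial_int a b c"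
    using assms by (rule trinomial_int_pred_first)
  have "(a + b + c) * trinomial_int a (b - 1) c = (b + a + c) * trinomial_int (b - 1) a c"
    by (simp add: trinomial_int_commute(1)[of a "b - 1" c])
  also have "\<dots> = b * trinomial_int a b c"
    using assms trinomial_int_pred_first[of b a c] by (simp add: trinomial_int_commute(1)[of b a c])
  finally show "(a + b + c) * trinomial_int a (b - 1) c = b * trinomial_int a b c" .
  have "(a + b + c) * trinomial_int a b (c - 1) = (c + b + a) * trinomial_int (c - 1) b a"
    by (simp add: trinomial_int_commute(2)[of a b "c - 1"])
  also have "\<dots> = c * trinomial_int a b c"
    using assms trinomial_int_pred_first[of c b a] by (simp add: trinomial_int_commute(2)[of c b a])
  finally show "(a + b + c) * trinomial_int a b (c - 1) = c * trinomial_int a b c" .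
qed

lemma trinomial_int_pascal:
  "trinomial_int a b c
     = trinomial_int (a - 1) b c + trinomial_int a (b - 1) c + trinomial_int a b (c - 1)
       + (if a = 0 \<and> b = 0 \<and> c = 0 then 1 else 0)"
proof (cases "a < 0 \<or> b < 0 \<or> c < 0")
  case True
  then show ?thesis by (auto simp: trinomial_int_def)
next
  case False
  show ?thesis
  proof (cases "a = 0 \<and> b = 0 \<and> c = 0")
    case True
    then show ?thesis by (simp add: trinomial_int_def trinomial_def)
  next
    case nonzero: False
    have "(a + b + c) * trinomial_int a b c = (a + b + c) *
        (trinomial_int (a - 1) b c + trinomial_int a (b - 1) c + trinomial_int a b (c - 1))"
      using trinomial_int_pred[of a b c] False by (simp add: algebra_simps)
    moreover have "a + b + c \<noteq> 0"
      using False nonzero by linarith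
    ultimately show ?thesis
      using nonzero by simp
  qed
qed

lemma trinomial_int_binomial:
  "trinomial_int (int n - int c - int b) (int b) (int c) = int ((n choose c) * ((n - c) choose b))"
proof (cases "c + b \<le> n")
  case True
  then have "nat (int n - int c - int b) = n - c - b"
    by simp
  moreover have "trinomial (n - c - b) b c = (n choose c) * ((n - c) choose b)"
    using True by (simp add: trinomial_def add.commute)
  ultimately show ?thesis
    using True by (simp add: trinomial_int_def)
next
  case False
  then have "(n choose c) * ((n - c) choose b) = 0"
    by (cases "c \<le> n") auto
  with False show ?thesis
    by (simp add: trinomial_int_def)
qed

section \<open>Three-variable power series\<close>

text \<open>Coefficient arrays are indexed by integers, so that multiplication by a variable is a shift
  of an index by one; this is faithful only for arrays vanishing at negative indices.\<close>

definition fps3 :: "(int \<Rightarrow> int \<Rightarrow> int \<Rightarrow> int) \<Rightarrow> int fps fps fps" where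
  "fps3 f = Abs_fps (\<lambda>k. Abs_fps (\<lambda>m. Abs_fps (\<lambda>j. f (int k) (int m) (int j))))"

definition nonneg_supported :: "(int \<Rightarrow> int \<Rightarrow> int \<Rightarrow> int) \<Rightarrow> bool" where
  "nonneg_supported f \<longleftrightarrow> (\<forall>k m j. k < 0 \<or> m < 0 \<or> j < 0 \<longrightarrow> f k m j = 0)"

lemma fps3_nth [simp]: "fps_nth (fps_nth (fps_nth (fps3 f) k) m) j = f (int k) (int m) (int j)"
  by (simp add: fps3_def)

lemma fps3_eqI:
  "(\<And>k m j. fps_nth (fps_nth (fps_nth A k) m) j = fps_nth (fps_nth (fps_nth B k) m) j) \<Longrightarrow> A = B"
  by (intro fps_ext) simp

lemma fps3_cong:
  "(\<And>k m j. 0 \<le> k \<Longrightarrow> 0 \<le> m \<Longrightarrow> 0 \<le> j \<Longrightarrow> f k m j = g k m j) \<Longrightarrow> fps3 f = fps3 g"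
  by (rule fps3_eqI) simp

lemma fps3_diff: "fps3 f - fps3 g = fps3 (\<lambda>k m j. f k m j - g k m j)"
  by (rule fps3_eqI) simp

lemma one_eq_fps3: "1 = fps3 (\<lambda>k m j. if k = 0 \<and> m = 0 \<and> j = 0 then 1 else 0)"
  by (rule fps3_eqI) (simp add: fps_one_nth)

lemma fps3_times_x:
  "nonneg_supported f \<Longrightarrow> fps3 f * fps_x = fps3 (\<lambda>k m j. f (k - 1) m j)"
  by (rule fps3_eqI) (auto simp: fps_x_def mult.commute[of _ fps_X] nonneg_supported_def of_nat_diff)

lemma fps3_times_y:
  "nonneg_supported f \<Longrightarrow> fps3 f * fps_y = fps3 (\<lambda>k m j. f k (m - 1) j)"
  by (rule fps3_eqI)
    (auto simp: fps_y_def mult.commute[of _ "fps_const _"] mult.commute[of _ fps_X]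
      nonneg_supported_def of_nat_diff)

lemma fps3_times_t:
  "nonneg_supported f \<Longrightarrow> fps3 f * fps_t = fps3 (\<lambda>k m j. f k m (j - 1))"
  by (rule fps3_eqI)
    (auto simp: fps_t_def mult.commute[of _ "fps_const _"] mult.commute[of _ fps_X]
      nonneg_supported_def of_nat_diff)

lemma nonneg_supported_shift:
  "nonneg_supported f \<Longrightarrow> nonneg_supported (\<lambda>k m j. f (k - 1) m j)"
  "nonneg_supported f \<Longrightarrow> nonneg_supported (\<lambda>k m j. f k (m - 1) j)"
  "nonneg_supported f \<Longrightarrow> nonneg_supported (\<lambda>k m j. f k m (j - 1))"
  by (auto simp: nonneg_supported_def)

lemma fps_x_times_t: "fps_x * fps_t = fps3 (\<lambda>k m j. if k = 1 \<and> m = 0 \<and> j = 1 then 1 else 0)"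
proof -
  define e :: "int \<Rightarrow> int \<Rightarrow> int \<Rightarrow> int"
    where "e = (\<lambda>k m j. if k = 0 \<and> m = 0 \<and> j = 0 then 1 else 0)"
  have e: "nonneg_supported e"
    by (auto simp: nonneg_supported_def e_def)
  have "fps_x * fps_t = fps3 e * fps_x * fps_t"
    by (simp add: e_def flip: one_eq_fps3)
  also have "\<dots> = fps3 (\<lambda>k m j. e (k - 1) m (j - 1))"
    unfolding fps3_times_x[OF e] fps3_times_t[OF nonneg_supported_shift(1)[OF e]] ..
  also have "\<dots> = fps3 (\<lambda>k m j. if k = 1 \<and> m = 0 \<and> j = 1 then 1 else 0)"
    by (rule fps3_cong) (auto simp: e_def)
  finally show ?thesis .
qed

section \<open>The generating function identity\<close>

text \<open>\<open>off_top_count k m j\<close> and \<open>on_top_count k m j\<close> count the face types with \<open>u\<close> false and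
  true respectively for \<open>n = k + m\<close> (\<open>face_counts_eq_card_face_types\<close>).\<close>

definition off_top_count :: "int \<Rightarrow> int \<Rightarrow> int \<Rightarrow> int" where
  "off_top_count k m j = (\<Sum>b\<in>{k - j..k - 1}. trinomial_int (k + m - j - b) b j)"

definition on_top_count :: "int \<Rightarrow> int \<Rightarrow> int \<Rightarrow> int" where
  "on_top_count k m j = (\<Sum>b\<in>{k - j..k - 1}. trinomial_int (k + m - j - 1 - b) b (j + 1))"

definition off_top_residual :: "int \<Rightarrow> int \<Rightarrow> int \<Rightarrow> int" where
  "off_top_residual k m j = trinomial_int (m - j + 1) (k - 1) (j - 1)"

lemma sum_atLeastAtMost_int_shift: "(\<Sum>b\<in>{p..q::int}. f b) = (\<Sum>b\<in>{p + 1..q + 1}. f (b - 1))"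
  by (rule sum.reindex_bij_witness[of _ "\<lambda>b. b - 1" "\<lambda>b. b + 1"]) auto

lemma on_top_count_recurrence:
  assumes "0 \<le> j"
  shows "on_top_count k m j - on_top_count (k - 1) m j - on_top_count k (m - 1) j
    = off_top_count k (m - 1) j"
proof -
  have "on_top_count (k - 1) m j
      = (\<Sum>b\<in>{k - j..k - 1}. trinomial_int (k + m - j - 1 - b) (b - 1) (j + 1))"
    unfolding on_top_count_def by (subst sum_atLeastAtMost_int_shift) (simp add: algebra_simps)
  moreover have "on_top_count k (m - 1) j
      = (\<Sum>b\<in>{k - j..k - 1}. trinomial_int (k + m - j - 1 - b - 1) b (j + 1))"
    unfolding on_top_count_def by (simp add: algebra_simps)
  ultimately have "on_top_count k m j - on_top_count (k - 1) m j - on_top_count k (m - 1) j =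
     (\<Sum>b\<in>{k - j..k - 1}. trinomial_int (k + m - j - 1 - b) b (j + 1)
        - trinomial_int (k + m - j - 1 - b) (b - 1) (j + 1)
        - trinomial_int (k + m - j - 1 - b - 1) b (j + 1))"
    unfolding on_top_count_def by (simp add: sum_subtractf)
  also have "\<dots> = (\<Sum>b\<in>{k - j..k - 1}. trinomial_int (k + m - j - 1 - b) b j)"
    using assms by (intro sum.cong refl) (subst trinomial_int_pascal, simp)
  finally show ?thesis
    unfolding off_top_count_def by (simp add: algebra_simps)
qed

lemma off_top_count_recurrence:
  assumes "0 \<le> j"
  shows "off_top_count k m j - off_top_count (k - 1) m j - off_top_count k (m - 1) j
    - off_top_count (k - 1) m (j - 1) = off_top_residual k m j"
proof (cases "j = 0")
  case True
  then show ?thesis by (simp add: off_top_count_def off_top_residual_def trinomial_int_def)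
next
  case False
  have "off_top_count (k - 1) m j
      = (\<Sum>b\<in>{k - j..k - 1}. trinomial_int (k + m - j - b) (b - 1) j)"
    unfolding off_top_count_def by (subst sum_atLeastAtMost_int_shift) (simp add: algebra_simps)
  moreover have "off_top_count k (m - 1) j
      = (\<Sum>b\<in>{k - j..k - 1}. trinomial_int (k + m - j - b - 1) b j)"
    unfolding off_top_count_def by (simp add: algebra_simps)
  ultimately have "off_top_count k m j - off_top_count (k - 1) m j - off_top_count k (m - 1) j =
     (\<Sum>b\<in>{k - j..k - 1}. trinomial_int (k + m - j - b) b j
        - trinomial_int (k + m - j - b) (b - 1) j - trinomial_int (k + m - j - b - 1) b j)"
    by (simp add: off_top_count_def sum_subtractf)
  also have "\<dots> = (\<Sum>b\<in>{k - j..k - 1}. trinomial_int (k + m - j - b) b (j - 1))"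
    using False by (intro sum.cong refl) (subst trinomial_int_pascal, simp)
  also have "{k - j..k - 1} = insert (k - 1) {k - j..k - 2}"
    using assms False by auto
  also have "(\<Sum>b\<in>insert (k - 1) {k - j..k - 2}. trinomial_int (k + m - j - b) b (j - 1)) =
      off_top_residual k m j + (\<Sum>b\<in>{k - j..k - 2}. trinomial_int (k + m - j - b) b (j - 1))"
    by (subst sum.insert) (auto simp: off_top_residual_def algebra_simps)
  also have "(\<Sum>b\<in>{k - j..k - 2}. trinomial_int (k + m - j - b) b (j - 1))
      = off_top_count (k - 1) m (j - 1)"
    unfolding off_top_count_def by (simp add: algebra_simps)
  finally show ?thesis
    by simp
qed

lemma off_top_residual_recurrence:
  "off_top_residual k m j - off_top_residual (k - 1) m j - off_top_residual k (m - 1) j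
    - off_top_residual k (m - 1) (j - 1) = (if k = 1 \<and> m = 0 \<and> j = 1 then 1 else 0)"
  unfolding off_top_residual_def
  by (subst trinomial_int_pascal[of "m - j + 1"]) (auto simp: algebra_simps)

lemma nonneg_supported_counts:
  "nonneg_supported off_top_count" "nonneg_supported on_top_count" "nonneg_supported off_top_residual"
  by (auto simp: nonneg_supported_def off_top_count_def on_top_count_def off_top_residual_def
      trinomial_int_def intro!: sum.neutral)

lemma fps3_face_counts_times:
  "fps3 (\<lambda>k m j. off_top_count k m j + on_top_count k m j) * (1 - fps_x - fps_y)
    = (1 - fps_x) * fps3 off_top_count"
proof -
  let ?G = "fps3 (\<lambda>k m j. off_top_count k m j + on_top_count k m j)"
  have supp: "nonneg_supported (\<lambda>k m j. off_top_count k m j + on_top_count k m j)"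
    using nonneg_supported_counts by (auto simp: nonneg_supported_def)
  have "?G * (1 - fps_x - fps_y) = ?G - ?G * fps_x - ?G * fps_y"
    by (simp add: algebra_simps)
  also have "\<dots> = fps3 (\<lambda>k m j. off_top_count k m j + on_top_count k m j
      - (off_top_count (k - 1) m j + on_top_count (k - 1) m j)
      - (off_top_count k (m - 1) j + on_top_count k (m - 1) j))"
    by (simp add: fps3_times_x fps3_times_y supp fps3_diff)
  also have "\<dots> = fps3 (\<lambda>k m j. off_top_count k m j - off_top_count (k - 1) m j)"
  proof (rule fps3_cong)
    fix k m j :: int
    assume "0 \<le> j"
    then show "off_top_count k m j + on_top_count k m j
        - (off_top_count (k - 1) m j + on_top_count (k - 1) m j)
        - (off_top_count k (m - 1) j + on_top_count k (m - 1) j)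
        = off_top_count k m j - off_top_count (k - 1) m j"
      using on_top_count_recurrence[of j k m] by simp
  qed
  also have "\<dots> = fps3 off_top_count - fps3 off_top_count * fps_x"
    by (simp add: fps3_times_x nonneg_supported_counts fps3_diff)
  also have "\<dots> = (1 - fps_x) * fps3 off_top_count"
    by (simp add: algebra_simps)
  finally show ?thesis .
qed

lemma fps3_off_top_count_times:
  "fps3 off_top_count * (1 - fps_x - fps_y - fps_x * fps_t) = fps3 off_top_residual"
proof -
  let ?T = "fps3 off_top_count"
  have "?T * (1 - fps_x - fps_y - fps_x * fps_t) = ?T - ?T * fps_x - ?T * fps_y - ?T * fps_x * fps_t"
    by (simp add: algebra_simps)
  also have "\<dots> = fps3 (\<lambda>k m j. off_top_count k m j - off_top_count (k - 1) m j
      - off_top_count k (m - 1) j - off_top_count (k - 1) m (j - 1))"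
    by (simp add: fps3_times_x fps3_times_y fps3_times_t nonneg_supported_counts
        nonneg_supported_shift fps3_diff)
  also have "\<dots> = fps3 off_top_residual"
    by (rule fps3_cong) (simp add: off_top_count_recurrence)
  finally show ?thesis .
qed

lemma fps3_off_top_residual_times:
  "fps3 off_top_residual * (1 - fps_x - fps_y - fps_y * fps_t) = fps_x * fps_t"
proof -
  let ?V = "fps3 off_top_residual"
  have "?V * (1 - fps_x - fps_y - fps_y * fps_t) = ?V - ?V * fps_x - ?V * fps_y - ?V * fps_y * fps_t"
    by (simp add: algebra_simps)
  also have "\<dots> = fps3 (\<lambda>k m j. off_top_residual k m j - off_top_residual (k - 1) m j
      - off_top_residual k (m - 1) j - off_top_residual k (m - 1) (j - 1))"
    by (simp add: fps3_times_x fps3_times_y fps3_times_t nonneg_supported_counts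
        nonneg_supported_shift fps3_diff)
  also have "\<dots> = fps_x * fps_t"
    unfolding off_top_residual_recurrence fps_x_times_t ..
  finally show ?thesis .
qed

section \<open>Faces of the hypersimplex\<close>

datatype ineq = Ge0 nat | Le1 nat | SumGe | SumLe

definition hs_ineqs :: "nat \<Rightarrow> ineq set" where
  "hs_ineqs n = Ge0 ` {..<n} \<union> Le1 ` {..<n} \<union> {SumGe, SumLe}"

lemma finite_hs_ineqs [simp]: "finite (hs_ineqs n)"
  by (simp add: hs_ineqs_def)

fun ineq_lhs :: "nat \<Rightarrow> ineq \<Rightarrow> (nat \<Rightarrow> real) \<Rightarrow> real" where
  "ineq_lhs n (Ge0 i) x = - x i"
| "ineq_lhs n (Le1 i) x = x i"
| "ineq_lhs n SumGe x = - (\<Sum>i<n. x i)"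
| "ineq_lhs n SumLe x = (\<Sum>i<n. x i)"

fun ineq_rhs :: "nat \<Rightarrow> ineq \<Rightarrow> real" where
  "ineq_rhs k (Ge0 i) = 0"
| "ineq_rhs k (Le1 i) = 1"
| "ineq_rhs k SumGe = 1 - real k"
| "ineq_rhs k SumLe = real k"

lemma ineq_lhs_combination:
  "ineq_lhs n l (\<lambda>i. a * x i + b * y i) = a * ineq_lhs n l x + b * ineq_lhs n l y"
  by (cases l) (simp_all add: sum.distrib sum_distrib_left algebra_simps)

lemma hypersimplex_ineqs:
  "hypersimplex n k = {x. (\<forall>i\<ge>n. x i = 0) \<and> (\<forall>l\<in>hs_ineqs n. ineq_lhs n l x \<le> ineq_rhs k l)}"
  unfolding hypersimplex_def hs_ineqs_def by (auto simp: ball_Un Ball_image_comp o_def)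

definition tight_ineqs :: "nat \<Rightarrow> nat \<Rightarrow> (nat \<Rightarrow> real) \<Rightarrow> ineq set" where
  "tight_ineqs n k x = {l \<in> hs_ineqs n. ineq_lhs n l x = ineq_rhs k l}"

lemma finite_tight_ineqs [simp]: "finite (tight_ineqs n k x)"
  unfolding tight_ineqs_def by simp

lemma hypersimplex_ho_tight:
  "hypersimplex_ho n k = {x \<in> hypersimplex n k. SumGe \<notin> tight_ineqs n k x}"
  unfolding hypersimplex_ho_def hypersimplex_def tight_ineqs_def hs_ineqs_def by auto

definition ineq_face :: "nat \<Rightarrow> nat \<Rightarrow> ineq set \<Rightarrow> (nat \<Rightarrow> real) set" where
  "ineq_face n k \<tau> = {x \<in> hypersimplex n k. \<tau> \<subseteq> tight_ineqs n k x}"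

lemma closed_seg_iff:
  "p \<in> closed_seg a b \<longleftrightarrow> (\<exists>u. 0 \<le> u \<and> u \<le> 1 \<and> p = (\<lambda>i. (1 - u) * a i + u * b i))"
  unfolding closed_seg_def by auto

lemma convex_combination_eq_bound:
  fixes A B c u :: real
  assumes "(1 - u) * A + u * B = c" "A \<le> c" "B \<le> c" "0 < u" "u < 1"
  shows "A = c \<and> B = c"
proof -
  have "(1 - u) * A \<le> (1 - u) * c" "u * B \<le> u * c"
    using assms by (auto intro: mult_left_mono)
  moreover have "(1 - u) * c + u * c = c"
    by (simp add: algebra_simps)
  ultimately have "(1 - u) * A = (1 - u) * c" "u * B = u * c"
    using assms(1) by linarith+
  then show ?thesis
    using assms by auto
qed

lemma combination_in_hypersimplex:
  assumes "x \<in> hypersimplex n k" "y \<in> hypersimplex n k" "0 \<le> u" "u \<le> 1"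
  shows "(\<lambda>i. (1 - u) * x i + u * y i) \<in> hypersimplex n k"
proof -
  have "ineq_lhs n l (\<lambda>i. (1 - u) * x i + u * y i) \<le> ineq_rhs k l" if "l \<in> hs_ineqs n" for l
  proof -
    have "ineq_lhs n l x \<le> ineq_rhs k l" "ineq_lhs n l y \<le> ineq_rhs k l"
      using assms that by (auto simp: hypersimplex_ineqs)
    then have "(1 - u) * ineq_lhs n l x + u * ineq_lhs n l y \<le> (1 - u) * ineq_rhs k l + u * ineq_rhs k l"
      using assms by (intro add_mono mult_left_mono) auto
    then show ?thesis
      unfolding ineq_lhs_combination by (simp add: algebra_simps)
  qed
  then show ?thesis
    using assms by (auto simp: hypersimplex_ineqs)
qed

lemma tight_ineqs_combination:
  assumes "x \<in> hypersimplex n k" "y \<in> hypersimplex n k" "0 < u" "u < 1"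
  shows "tight_ineqs n k (\<lambda>i. (1 - u) * x i + u * y i) = tight_ineqs n k x \<inter> tight_ineqs n k y"
proof -
  have "ineq_lhs n l (\<lambda>i. (1 - u) * x i + u * y i) = ineq_rhs k l
      \<longleftrightarrow> ineq_lhs n l x = ineq_rhs k l \<and> ineq_lhs n l y = ineq_rhs k l"
    if "l \<in> hs_ineqs n" for l
  proof -
    have "ineq_lhs n l x \<le> ineq_rhs k l" "ineq_lhs n l y \<le> ineq_rhs k l"
      using assms that by (auto simp: hypersimplex_ineqs)
    then show ?thesis
      unfolding ineq_lhs_combination
      using convex_combination_eq_bound[of u "ineq_lhs n l x" "ineq_lhs n l y" "ineq_rhs k l"] assms
      by (auto simp: left_diff_distrib)
  qed
  then show ?thesis
    unfolding tight_ineqs_def by auto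
qed

lemma is_face_ineq_face: "is_face (ineq_face n k \<tau>) (hypersimplex n k)"
proof -
  have convex: "convex_pt (ineq_face n k \<tau>)"
    unfolding convex_pt_def
  proof (intro ballI subsetI)
    fix a b p
    assume a: "a \<in> ineq_face n k \<tau>" and b: "b \<in> ineq_face n k \<tau>" and "p \<in> closed_seg a b"
    then obtain u where u: "0 \<le> u" "u \<le> 1" and p: "p = (\<lambda>i. (1 - u) * a i + u * b i)"
      by (auto simp: closed_seg_iff)
    have "p \<in> hypersimplex n k"
      using a b combination_in_hypersimplex[OF _ _ u] by (auto simp: ineq_face_def p)
    moreover have "\<tau> \<subseteq> tight_ineqs n k p"
    proof
      fix l
      assume "l \<in> \<tau>"
      then have "l \<in> tight_ineqs n k a" "l \<in> tight_ineqs n k b"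
        using a b by (auto simp: ineq_face_def)
      then show "l \<in> tight_ineqs n k p"
        unfolding tight_ineqs_def p ineq_lhs_combination by (auto simp: left_diff_distrib)
    qed
    ultimately show "p \<in> ineq_face n k \<tau>"
      by (simp add: ineq_face_def)
  qed
  have extremal: "a \<in> ineq_face n k \<tau> \<and> b \<in> ineq_face n k \<tau>"
    if a: "a \<in> hypersimplex n k" and b: "b \<in> hypersimplex n k"
      and p: "p \<in> ineq_face n k \<tau>" and "p \<in> open_seg a b" for a b p
  proof -
    obtain u where "0 \<le> u" "u \<le> 1" and pu: "p = (\<lambda>i. (1 - u) * a i + u * b i)"
      and "p \<noteq> a" "p \<noteq> b"
      using \<open>p \<in> open_seg a b\<close> by (auto simp: open_seg_def closed_seg_iff)
    then have "0 < u" "u < 1"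
      by (auto simp: le_less)
    then have "tight_ineqs n k p = tight_ineqs n k a \<inter> tight_ineqs n k b"
      using tight_ineqs_combination[OF a b] pu by simp
    then show ?thesis
      using p a b by (auto simp: ineq_face_def)
  qed
  have "ineq_face n k \<tau> \<subseteq> hypersimplex n k"
    by (auto simp: ineq_face_def)
  then show ?thesis
    unfolding is_face_def using convex extremal by blast
qed

lemma face_least_tight_point:
  assumes F: "is_face F (hypersimplex n k)" and "F \<noteq> {}"
  obtains z where "z \<in> F" "\<And>x. x \<in> F \<Longrightarrow> tight_ineqs n k z \<subseteq> tight_ineqs n k x"
proof -
  obtain z where z: "z \<in> F"
    and z_least: "\<And>x. x \<in> F \<Longrightarrow> card (tight_ineqs n k z) \<le> card (tight_ineqs n k x)"
    using ex_has_least_nat[of "\<lambda>x. x \<in> F" _ "\<lambda>x. card (tight_ineqs n k x)"] \<open>F \<noteq> {}\<close> by blast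
  have "tight_ineqs n k z \<subseteq> tight_ineqs n k x" if x: "x \<in> F" for x
  proof -
    let ?m = "\<lambda>i. (1 - 1/2) * z i + (1/2) * x i"
    have "?m \<in> closed_seg z x"
      unfolding closed_seg_iff by (rule exI[of _ "1/2"]) simp
    then have "?m \<in> F"
      using F z x unfolding is_face_def convex_pt_def by blast
    moreover have "tight_ineqs n k ?m = tight_ineqs n k z \<inter> tight_ineqs n k x"
      using F z x by (intro tight_ineqs_combination) (auto simp: is_face_def)
    ultimately have "card (tight_ineqs n k z) \<le> card (tight_ineqs n k z \<inter> tight_ineqs n k x)"
      using z_least by metis
    then have "tight_ineqs n k z \<inter> tight_ineqs n k x = tight_ineqs n k z"
      by (intro card_seteq) auto
    then show ?thesis
      by auto
  qed
  then show ?thesis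
    using z that by blast
qed

lemma hypersimplex_extension_beyond:
  assumes zP: "z \<in> hypersimplex n k" and xP: "x \<in> hypersimplex n k"
    and tight: "tight_ineqs n k z \<subseteq> tight_ineqs n k x"
  obtains \<epsilon> :: real where "\<epsilon> > 0" "(\<lambda>i. (1 + \<epsilon>) * z i + (- \<epsilon>) * x i) \<in> hypersimplex n k"
proof -
  define S where "S = hs_ineqs n - tight_ineqs n k z"
  define slack where "slack l = ineq_rhs k l - ineq_lhs n l z" for l
  define w where "w l = \<bar>ineq_lhs n l z - ineq_lhs n l x\<bar> + 1" for l
  \<comment> \<open>small enough to keep the inequalities that are slack at \<open>z\<close>; the others are tight at \<open>x\<close> too\<close>
  define \<epsilon> where "\<epsilon> = Min (insert 1 ((\<lambda>l. slack l / w l) ` S))"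
  have slack_pos: "slack l > 0" if "l \<in> S" for l
    using that zP unfolding S_def slack_def tight_ineqs_def by (auto simp: hypersimplex_ineqs)
  have w_pos: "w l > 0" for l
    unfolding w_def by simp
  have fin: "finite (insert 1 ((\<lambda>l. slack l / w l) ` S))"
    unfolding S_def by simp
  have "\<epsilon> > 0"
    unfolding \<epsilon>_def using fin slack_pos w_pos by (subst Min_gr_iff) auto
  have \<epsilon>_le: "\<epsilon> * w l \<le> slack l" if "l \<in> S" for l
  proof -
    have "\<epsilon> \<le> slack l / w l"
      unfolding \<epsilon>_def using fin that by (intro Min_le) auto
    then show ?thesis
      using w_pos[of l] by (simp add: field_simps)
  qed
  define y where "y = (\<lambda>i. (1 + \<epsilon>) * z i + (- \<epsilon>) * x i)"
  have "y \<in> hypersimplex n k"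
    unfolding hypersimplex_ineqs
  proof (intro CollectI conjI allI impI ballI)
    fix i
    assume "n \<le> i"
    then show "y i = 0"
      using xP zP by (simp add: y_def hypersimplex_ineqs)
  next
    fix l
    assume l: "l \<in> hs_ineqs n"
    have y_lhs: "ineq_lhs n l y = (1 + \<epsilon>) * ineq_lhs n l z + (- \<epsilon>) * ineq_lhs n l x"
      unfolding y_def ineq_lhs_combination ..
    show "ineq_lhs n l y \<le> ineq_rhs k l"
    proof (cases "l \<in> tight_ineqs n k z")
      case True
      then have "ineq_lhs n l z = ineq_rhs k l" "ineq_lhs n l x = ineq_rhs k l"
        using tight by (auto simp: tight_ineqs_def)
      then show ?thesis
        unfolding y_lhs by (simp add: algebra_simps)
    next
      case False
      then have "\<epsilon> * w l \<le> slack l"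
        using l by (intro \<epsilon>_le) (simp add: S_def)
      moreover have "\<epsilon> * (ineq_lhs n l z - ineq_lhs n l x) \<le> \<epsilon> * w l"
        using \<open>\<epsilon> > 0\<close> unfolding w_def by (intro mult_left_mono) auto
      ultimately show ?thesis
        unfolding y_lhs slack_def by (simp add: algebra_simps)
    qed
  qed
  with \<open>\<epsilon> > 0\<close> show ?thesis
    using that by (simp add: y_def)
qed

lemma face_eq_ineq_face:
  assumes F: "is_face F (hypersimplex n k)" and z: "z \<in> F"
    and z_least: "\<And>x. x \<in> F \<Longrightarrow> tight_ineqs n k z \<subseteq> tight_ineqs n k x"
  shows "F = ineq_face n k (tight_ineqs n k z)"
proof
  show "F \<subseteq> ineq_face n k (tight_ineqs n k z)"
    using F z_least by (auto simp: ineq_face_def is_face_def)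
  show "ineq_face n k (tight_ineqs n k z) \<subseteq> F"
  proof
    fix x
    assume "x \<in> ineq_face n k (tight_ineqs n k z)"
    then have xP: "x \<in> hypersimplex n k" and tight: "tight_ineqs n k z \<subseteq> tight_ineqs n k x"
      by (auto simp: ineq_face_def)
    have zP: "z \<in> hypersimplex n k"
      using F z by (auto simp: is_face_def)
    show "x \<in> F"
    proof (cases "x = z")
      case True
      then show ?thesis using z by simp
    next
      case False
      obtain \<epsilon> :: real where "\<epsilon> > 0" and yP: "(\<lambda>i. (1 + \<epsilon>) * z i + (- \<epsilon>) * x i) \<in> hypersimplex n k"
        using hypersimplex_extension_beyond[OF zP xP tight] .
      define y where "y = (\<lambda>i. (1 + \<epsilon>) * z i + (- \<epsilon>) * x i)"
      define u where "u = 1 / (1 + \<epsilon>)"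
      have "z = (\<lambda>i. (1 - u) * x i + u * y i)"
      proof
        fix i
        have "(1 - u) * x i + u * y i = (1 - u * (1 + \<epsilon>)) * x i + u * (1 + \<epsilon>) * z i"
          unfolding y_def by (simp add: algebra_simps)
        also have "u * (1 + \<epsilon>) = 1"
          using \<open>\<epsilon> > 0\<close> by (simp add: u_def)
        finally show "z i = (1 - u) * x i + u * y i"
          by simp
      qed
      moreover have "0 \<le> u" "u \<le> 1"
        using \<open>\<epsilon> > 0\<close> by (auto simp: u_def)
      ultimately have "z \<in> closed_seg x y"
        unfolding closed_seg_iff by blast
      moreover have "z \<noteq> y"
      proof
        assume "z = y"
        then have "\<epsilon> * z i = \<epsilon> * x i" for i
          by (auto simp: y_def algebra_simps dest: fun_cong[of _ _ i])
        then have "z = x"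
          using \<open>\<epsilon> > 0\<close> by auto
        then show False
          using False by simp
      qed
      ultimately have "z \<in> open_seg x y"
        unfolding open_seg_def using False by auto
      then show ?thesis
        using F xP yP z unfolding is_face_def y_def by blast
    qed
  qed
qed

section \<open>Dimension of a face\<close>

interpretation pt: vector_space pt_scale
  by (rule vector_space_pt)

lemma sum_fun_apply: "(sum f A) x = (\<Sum>a\<in>A. f a x)"
  for f :: "'b \<Rightarrow> 'c \<Rightarrow> 'd::comm_monoid_add"
  by (induct A rule: infinite_finite_induct) auto

lemma pt_independent_diagonal_family:
  assumes "finite I" and diag: "\<And>i. i \<in> I \<Longrightarrow> w i i = 1"
    and off_diag: "\<And>i l. i \<in> I \<Longrightarrow> l \<in> I \<Longrightarrow> l \<noteq> i \<Longrightarrow> w i l = 0"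
  shows "pt.independent (w ` I)" "inj_on w I"
proof -
  show "inj_on w I"
  proof (rule inj_onI)
    fix i i'
    assume "i \<in> I" "i' \<in> I" "w i = w i'"
    then have "w i' i = 1"
      using diag by metis
    then show "i = i'"
      using off_diag[of i' i] \<open>i \<in> I\<close> \<open>i' \<in> I\<close> by (cases "i = i'") auto
  qed
  show "pt.independent (w ` I)"
    unfolding pt.dependent_explicit
  proof clarify
    fix T u v
    assume T: "finite T" "T \<subseteq> w ` I" and combination: "(\<Sum>v\<in>T. pt_scale (u v) v) = 0"
      and v: "v \<in> T" "u v \<noteq> 0"
    obtain i0 where i0: "i0 \<in> I" "v = w i0"
      using v T by auto
    have "0 = (\<Sum>v\<in>T. pt_scale (u v) v) i0"
      using combination by simp
    also have "\<dots> = u v * v i0 + (\<Sum>v'\<in>T - {v}. u v' * v' i0)"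
      using T v by (simp add: sum_fun_apply pt_scale_def sum.remove)
    also have "(\<Sum>v'\<in>T - {v}. u v' * v' i0) = 0"
    proof (rule sum.neutral, rule ballI)
      fix v'
      assume v': "v' \<in> T - {v}"
      then obtain i where "i \<in> I" "v' = w i" "i \<noteq> i0"
        using T i0 by auto
      then show "u v' * v' i0 = 0"
        using off_diag[of i i0] i0 by simp
    qed
    finally have "u v = 0"
      using diag[OF i0(1)] i0 by simp
    then show False
      using v by simp
  qed
qed

definition unit_pt :: "nat \<Rightarrow> nat \<Rightarrow> real" where
  "unit_pt i = (\<lambda>l. if l = i then 1 else 0)"

lemma sum_unit_pt: "i < n \<Longrightarrow> (\<Sum>l<n. unit_pt i l) = 1"
  unfolding unit_pt_def by (simp add: sum.delta)

definition diff_set :: "(nat \<Rightarrow> real) set \<Rightarrow> (nat \<Rightarrow> real) set" where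
  "diff_set F = {x - y | x y. x \<in> F \<and> y \<in> F}"

definition fractional_coords :: "nat \<Rightarrow> (nat \<Rightarrow> real) \<Rightarrow> nat set" where
  "fractional_coords n z = {i. i < n \<and> 0 < z i \<and> z i < 1}"

lemma finite_fractional_coords [simp]: "finite (fractional_coords n z)"
  unfolding fractional_coords_def by simp

lemma ineq_face_iff: "x \<in> ineq_face n k \<tau> \<longleftrightarrow> x \<in> hypersimplex n k \<and> \<tau> \<subseteq> tight_ineqs n k x"
  unfolding ineq_face_def by simp

lemma SumLe_tight_iff: "SumLe \<in> tight_ineqs n k z \<longleftrightarrow> (\<Sum>i<n. z i) = real k"
  unfolding tight_ineqs_def hs_ineqs_def by auto

lemma SumGe_tight_iff: "SumGe \<in> tight_ineqs n k z \<longleftrightarrow> (\<Sum>i<n. z i) = real k - 1"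
  unfolding tight_ineqs_def hs_ineqs_def by auto

lemma tight_ineqs_subset_iff:
  "tight_ineqs n k z \<subseteq> tight_ineqs n k x \<longleftrightarrow>
     (\<forall>i<n. z i = 0 \<longrightarrow> x i = 0) \<and> (\<forall>i<n. z i = 1 \<longrightarrow> x i = 1) \<and>
     ((\<Sum>i<n. z i) = real k \<longrightarrow> (\<Sum>i<n. x i) = real k) \<and>
     ((\<Sum>i<n. z i) = real k - 1 \<longrightarrow> (\<Sum>i<n. x i) = real k - 1)"
  unfolding tight_ineqs_def hs_ineqs_def by (auto simp: subset_iff)

lemma face_diff_supported:
  assumes "z \<in> hypersimplex n k" "v \<in> diff_set (ineq_face n k (tight_ineqs n k z))"
    and "l \<notin> fractional_coords n z"
  shows "v l = 0"
proof -
  obtain x y where v: "v = x - y" and x: "x \<in> ineq_face n k (tight_ineqs n k z)"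
    and y: "y \<in> ineq_face n k (tight_ineqs n k z)"
    using assms(2) by (auto simp: diff_set_def)
  show ?thesis
  proof (cases "l < n")
    case True
    then have "z l = 0 \<or> z l = 1"
      using assms(1,3) by (force simp: hypersimplex_def fractional_coords_def)
    then show ?thesis
      using x y True by (auto simp: v ineq_face_iff tight_ineqs_subset_iff)
  next
    case False
    then show ?thesis
      using x y by (auto simp: v ineq_face_iff hypersimplex_def)
  qed
qed

lemma face_diff_sum_zero:
  assumes "SumLe \<in> tight_ineqs n k z" "v \<in> diff_set (ineq_face n k (tight_ineqs n k z))"
  shows "(\<Sum>l<n. v l) = 0"
  using assms by (auto simp: diff_set_def ineq_face_iff tight_ineqs_subset_iff SumLe_tight_iff sum_subtractf)

lemma face_diff_in_span_units:
  assumes "z \<in> hypersimplex n k" "v \<in> diff_set (ineq_face n k (tight_ineqs n k z))"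
  shows "v \<in> pt.span (unit_pt ` fractional_coords n z)"
proof -
  define C where "C = fractional_coords n z"
  have "v = (\<Sum>i\<in>C. pt_scale (v i) (unit_pt i))"
  proof
    fix l
    have "(\<Sum>i\<in>C. pt_scale (v i) (unit_pt i)) l = (if l \<in> C then v l else 0)"
      unfolding unit_pt_def C_def
      by (simp add: sum_fun_apply pt_scale_def sum.delta' if_distrib[of "\<lambda>x. _ * x"] cong: if_cong)
    also have "\<dots> = v l"
      using face_diff_supported[OF assms, of l] by (auto simp: C_def)
    finally show "v l = (\<Sum>i\<in>C. pt_scale (v i) (unit_pt i)) l"
      by simp
  qed
  also have "\<dots> \<in> pt.span (unit_pt ` C)"
    by (intro pt.span_sum pt.span_scale pt.span_base) auto
  finally show ?thesis
    by (simp add: C_def)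
qed

lemma face_diff_in_span_unit_diffs:
  assumes zP: "z \<in> hypersimplex n k" and "SumLe \<in> tight_ineqs n k z"
    and v: "v \<in> diff_set (ineq_face n k (tight_ineqs n k z))" and i0: "i0 \<in> fractional_coords n z"
  shows "v \<in> pt.span ((\<lambda>i. unit_pt i - unit_pt i0) ` (fractional_coords n z - {i0}))"
proof -
  define C where "C = fractional_coords n z"
  define I where "I = C - {i0}"
  have supp: "v l = 0" if "l \<notin> C" for l
    using face_diff_supported[OF zP v] that by (simp add: C_def)
  have "(\<Sum>l\<in>C. v l) = (\<Sum>l<n. v l)"
    by (rule sum.mono_neutral_left) (use supp in \<open>auto simp: C_def fractional_coords_def\<close>)
  then have "(\<Sum>l\<in>C. v l) = 0"
    using face_diff_sum_zero assms by simp
  then have sum_I: "(\<Sum>l\<in>I. v l) = - v i0"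
    using i0 by (simp add: I_def C_def sum_diff1)
  have "v = (\<Sum>i\<in>I. pt_scale (v i) (unit_pt i - unit_pt i0))"
  proof
    fix l
    have "(\<Sum>i\<in>I. pt_scale (v i) (unit_pt i - unit_pt i0)) l
        = (\<Sum>i\<in>I. v i * unit_pt i l) - (\<Sum>i\<in>I. v i) * unit_pt i0 l"
      by (simp add: sum_fun_apply pt_scale_def right_diff_distrib sum_subtractf sum_distrib_right)
    also have "(\<Sum>i\<in>I. v i * unit_pt i l) = (if l \<in> I then v l else 0)"
      unfolding unit_pt_def I_def C_def
      by (simp add: sum.delta' if_distrib[of "\<lambda>x. _ * x"] cong: if_cong)
    finally have "(\<Sum>i\<in>I. pt_scale (v i) (unit_pt i - unit_pt i0)) l
        = (if l \<in> I then v l else 0) - (\<Sum>i\<in>I. v i) * unit_pt i0 l" .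
    then show "v l = (\<Sum>i\<in>I. pt_scale (v i) (unit_pt i - unit_pt i0)) l"
      unfolding sum_I using supp[of l] by (auto simp: I_def unit_pt_def)
  qed
  also have "\<dots> \<in> pt.span ((\<lambda>i. unit_pt i - unit_pt i0) ` I)"
    by (intro pt.span_sum pt.span_scale pt.span_base) auto
  finally show ?thesis
    by (simp add: I_def C_def)
qed

lemma direction_in_span_face_diffs:
  assumes "z \<in> hypersimplex n k" "\<epsilon> \<noteq> 0"
    and "(\<lambda>l. z l + \<epsilon> * d l) \<in> ineq_face n k (tight_ineqs n k z)"
  shows "d \<in> pt.span (diff_set (ineq_face n k (tight_ineqs n k z)))"
proof -
  have "(\<lambda>l. z l + \<epsilon> * d l) - z \<in> diff_set (ineq_face n k (tight_ineqs n k z))"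
    using assms unfolding diff_set_def by (auto simp: ineq_face_iff)
  then have "pt_scale (1 / \<epsilon>) ((\<lambda>l. z l + \<epsilon> * d l) - z) \<in> pt.span (diff_set (ineq_face n k (tight_ineqs n k z)))"
    by (intro pt.span_scale pt.span_base)
  moreover have "pt_scale (1 / \<epsilon>) ((\<lambda>l. z l + \<epsilon> * d l) - z) = d"
    using assms(2) by (auto simp: pt_scale_def)
  ultimately show ?thesis
    by simp
qed

lemma unit_pt_in_span_face_diffs:
  assumes zP: "z \<in> hypersimplex n k" and "SumGe \<notin> tight_ineqs n k z" "SumLe \<notin> tight_ineqs n k z"
    and i: "i \<in> fractional_coords n z"
  shows "unit_pt i \<in> pt.span (diff_set (ineq_face n k (tight_ineqs n k z)))"
proof -
  have z_sum: "real k - 1 < (\<Sum>i<n. z i)" "(\<Sum>i<n. z i) < real k"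
    using assms by (auto simp: hypersimplex_def SumGe_tight_iff SumLe_tight_iff)
  have zi: "i < n" "0 < z i" "z i < 1"
    using i by (auto simp: fractional_coords_def)
  define \<epsilon> where "\<epsilon> = min (1 - z i) (real k - (\<Sum>i<n. z i))"
  have "\<epsilon> > 0"
    using zi z_sum by (simp add: \<epsilon>_def)
  define w where "w = (\<lambda>l. z l + \<epsilon> * unit_pt i l)"
  have w_sum: "(\<Sum>l<n. w l) = (\<Sum>l<n. z l) + \<epsilon>"
    unfolding w_def by (simp add: sum.distrib sum_distrib_left[symmetric] sum_unit_pt zi)
  have "w \<in> hypersimplex n k"
    using zP \<open>\<epsilon> > 0\<close> zi w_sum z_sum
    by (auto simp: hypersimplex_def w_def unit_pt_def \<epsilon>_def)
  then have wF: "w \<in> ineq_face n k (tight_ineqs n k z)"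
    unfolding ineq_face_iff tight_ineqs_subset_iff using zi z_sum
    by (auto simp: w_def unit_pt_def)
  show ?thesis
    using direction_in_span_face_diffs[OF zP _ wF[unfolded w_def]] \<open>\<epsilon> > 0\<close> by simp
qed

lemma unit_pt_diff_in_span_face_diffs:
  assumes zP: "z \<in> hypersimplex n k"
    and i: "i \<in> fractional_coords n z" and i0: "i0 \<in> fractional_coords n z" and "i \<noteq> i0"
  shows "unit_pt i - unit_pt i0 \<in> pt.span (diff_set (ineq_face n k (tight_ineqs n k z)))"
proof -
  have zi: "i < n" "0 < z i" "z i < 1" "i0 < n" "0 < z i0" "z i0 < 1"
    using i i0 by (auto simp: fractional_coords_def)
  define \<epsilon> where "\<epsilon> = min (1 - z i) (z i0)"
  have "\<epsilon> > 0"
    using zi by (simp add: \<epsilon>_def)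
  define w where "w = (\<lambda>l. z l + \<epsilon> * (unit_pt i - unit_pt i0) l)"
  have w_sum: "(\<Sum>l<n. w l) = (\<Sum>l<n. z l)"
    unfolding w_def by (simp add: sum.distrib sum_distrib_left[symmetric] sum_subtractf sum_unit_pt zi)
  have "w \<in> hypersimplex n k"
    using zP \<open>\<epsilon> > 0\<close> zi w_sum \<open>i \<noteq> i0\<close>
    by (auto simp: hypersimplex_def w_def unit_pt_def \<epsilon>_def)
  then have wF: "w \<in> ineq_face n k (tight_ineqs n k z)"
    unfolding ineq_face_iff tight_ineqs_subset_iff using zi w_sum
    by (auto simp: w_def unit_pt_def)
  show ?thesis
    using direction_in_span_face_diffs[OF zP _ wF[unfolded w_def]] \<open>\<epsilon> > 0\<close> by (simp add: fun_diff_def)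
qed

lemma aff_dim_ineq_face:
  assumes zP: "z \<in> hypersimplex n k" and "SumGe \<notin> tight_ineqs n k z"
  shows "aff_dim_pt (ineq_face n k (tight_ineqs n k z)) =
    int (if SumLe \<in> tight_ineqs n k z then card (fractional_coords n z) - 1
         else card (fractional_coords n z))"
proof -
  define C where "C = fractional_coords n z"
  define D where "D = diff_set (ineq_face n k (tight_ineqs n k z))"
  have "z \<in> ineq_face n k (tight_ineqs n k z)"
    using zP by (simp add: ineq_face_iff)
  then have aff_dim: "aff_dim_pt (ineq_face n k (tight_ineqs n k z)) = int (pt.dim D)"
    unfolding aff_dim_pt_def D_def diff_set_def by auto
  have D_units: "D \<subseteq> pt.span (unit_pt ` C)"
    using face_diff_in_span_units[OF zP] by (auto simp: C_def D_def)
  have units_indep: "pt.independent (unit_pt ` C)" "inj_on unit_pt C"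
    using pt_independent_diagonal_family[of C unit_pt] by (auto simp: unit_pt_def C_def)
  have dim_if_units: "pt.dim D = card C" if "unit_pt ` C \<subseteq> pt.span D"
  proof -
    have "pt.dim D = card (unit_pt ` C)"
      using that D_units units_indep by (intro pt.dim_eq_card) (auto simp: pt.span_eq)
    then show ?thesis
      using units_indep by (simp add: card_image)
  qed
  show ?thesis
  proof (cases "SumLe \<in> tight_ineqs n k z")
    case False
    have "unit_pt ` C \<subseteq> pt.span D"
      using unit_pt_in_span_face_diffs[OF assms False] by (auto simp: C_def D_def)
    then show ?thesis
      using False aff_dim dim_if_units by (simp add: C_def)
  next
    case on_top: True
    show ?thesis
    proof (cases "C = {}")
      case True
      then show ?thesis
        using on_top aff_dim dim_if_units by (simp add: C_def)
    next
      case False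
      then obtain i0 where i0: "i0 \<in> C"
        by blast
      define E where "E = (\<lambda>i. unit_pt i - unit_pt i0) ` (C - {i0})"
      have E_indep: "pt.independent E" "inj_on (\<lambda>i. unit_pt i - unit_pt i0) (C - {i0})"
        unfolding E_def using pt_independent_diagonal_family[of "C - {i0}" "\<lambda>i. unit_pt i - unit_pt i0"]
        by (auto simp: unit_pt_def C_def)
      have "E \<subseteq> pt.span D"
        using unit_pt_diff_in_span_face_diffs[OF zP] i0 by (auto simp: E_def C_def D_def)
      moreover have "D \<subseteq> pt.span E"
        using face_diff_in_span_unit_diffs[OF zP on_top] i0 by (auto simp: E_def C_def D_def)
      ultimately have "pt.dim D = card E"
        using E_indep by (intro pt.dim_eq_card) (auto simp: pt.span_eq)
      also have "card E = card C - 1"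
        using E_indep i0 by (simp add: E_def card_image C_def)
      finally show ?thesis
        using on_top aff_dim by (simp add: C_def)
    qed
  qed
qed

section \<open>Classification and count of the faces of the half-open hypersimplex\<close>

definition type_ineqs :: "nat \<Rightarrow> nat set \<Rightarrow> nat set \<Rightarrow> bool \<Rightarrow> ineq set" where
  "type_ineqs n B C u = Ge0 ` ({..<n} - B - C) \<union> Le1 ` B \<union> (if u then {SumLe} else {})"

definition face_types :: "nat \<Rightarrow> nat \<Rightarrow> nat \<Rightarrow> (nat set \<times> nat set \<times> bool) set" where
  "face_types n k j = {(B, C, u). B \<subseteq> {..<n} \<and> C \<subseteq> {..<n} \<and> B \<inter> C = {} \<and>
     (if u then card C = j + 1 \<and> card B < k \<and> k < card B + card C
      else card C = j \<and> card B + 1 \<le> k \<and> k \<le> card B + card C)}"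

definition type_face :: "nat \<Rightarrow> nat \<Rightarrow> nat set \<times> nat set \<times> bool \<Rightarrow> (nat \<Rightarrow> real) set" where
  "type_face n k = (\<lambda>(B, C, u). ineq_face n k (type_ineqs n B C u) \<inter> hypersimplex_ho n k)"

text \<open>The common value of the fractional coordinates is chosen to put the coordinate sum at \<open>k\<close>
  or, off the top hyperplane, at \<open>k - 1/2\<close>.\<close>

definition type_point :: "nat \<Rightarrow> nat set \<Rightarrow> nat set \<Rightarrow> bool \<Rightarrow> nat \<Rightarrow> real" where
  "type_point k B C u =
     (let s = ((if u then real k else real k - 1/2) - real (card B)) / real (card C)
      in (\<lambda>i. (if i \<in> B then 1 else 0) + (if i \<in> C then s else 0)))"

lemma sum_indicator_split:
  fixes f :: "nat \<Rightarrow> real"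
  assumes "B \<subseteq> {..<n}" "C \<subseteq> {..<n}" "B \<inter> C = {}"
  shows "(\<Sum>i<n. (if i \<in> B then 1 else 0) + (if i \<in> C then f i else 0))
    = real (card B) + (\<Sum>i\<in>C. f i)"
proof -
  have "(\<Sum>i<n. (if i \<in> B then 1 else 0) + (if i \<in> C then f i else 0))
      = (\<Sum>i<n. (if i \<in> B then 1 else 0)) + (\<Sum>i<n. (if i \<in> C then f i else 0))"
    by (simp add: sum.distrib)
  also have "(\<Sum>i<n. (if i \<in> B then 1 else 0 :: real)) = (\<Sum>i\<in>{..<n} \<inter> B. 1)"
    using sum.inter_restrict[of "{..<n}" "\<lambda>_. 1::real" B] by simp
  also have "{..<n} \<inter> B = B"
    using assms by auto
  also have "(\<Sum>i<n. (if i \<in> C then f i else 0)) = (\<Sum>i\<in>{..<n} \<inter> C. f i)"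
    using sum.inter_restrict[of "{..<n}" f C] by simp
  also have "{..<n} \<inter> C = C"
    using assms by auto
  finally show ?thesis
    by simp
qed

lemma type_point_realizes:
  assumes R: "(B, C, u) \<in> face_types n k j" and "1 \<le> j"
  defines "z \<equiv> type_point k B C u"
  shows "z \<in> hypersimplex n k" "tight_ineqs n k z = type_ineqs n B C u"
    "SumGe \<notin> tight_ineqs n k z" "fractional_coords n z = C"
proof -
  have BC: "B \<subseteq> {..<n}" "C \<subseteq> {..<n}" "B \<inter> C = {}"
    using R by (auto simp: face_types_def)
  define s where "s = ((if u then real k else real k - 1/2) - real (card B)) / real (card C)"
  have "card C > 0"
    using R \<open>1 \<le> j\<close> by (auto simp: face_types_def split: if_splits)
  have s01: "0 < s" "s < 1"
  proof -
    have "if u then card B < k \<and> k < card B + card C else card B + 1 \<le> k \<and> k \<le> card B + card C"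
      using R by (auto simp: face_types_def split: if_splits)
    then have "0 < s \<and> s < 1"
      using \<open>card C > 0\<close> by (cases u) (auto simp: s_def field_simps)
    then show "0 < s" "s < 1"
      by auto
  qed
  have z_sum: "(\<Sum>i<n. z i) = (if u then real k else real k - 1/2)"
  proof -
    have "(\<Sum>i<n. z i) = real (card B) + (\<Sum>i\<in>C. s)"
      unfolding z_def type_point_def Let_def s_def[symmetric] by (rule sum_indicator_split[OF BC])
    also have "\<dots> = (if u then real k else real k - 1/2)"
      using \<open>card C > 0\<close> by (auto simp: s_def)
    finally show ?thesis .
  qed
  have zi: "z i = (if i \<in> B then 1 else if i \<in> C then s else 0)" for i
    using BC unfolding z_def type_point_def Let_def s_def[symmetric] by auto
  show "z \<in> hypersimplex n k"
    unfolding hypersimplex_def using z_sum s01 BC by (auto simp: zi)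
  show "fractional_coords n z = C"
    using s01 BC by (auto simp: zi fractional_coords_def)
  show tight: "tight_ineqs n k z = type_ineqs n B C u"
  proof (rule set_eqI)
    fix l
    show "l \<in> tight_ineqs n k z \<longleftrightarrow> l \<in> type_ineqs n B C u"
      using s01 BC z_sum unfolding tight_ineqs_def hs_ineqs_def type_ineqs_def
      by (cases l) (auto simp: zi)
  qed
  show "SumGe \<notin> tight_ineqs n k z"
    unfolding tight type_ineqs_def by auto
qed

lemma type_ineqs_inj:
  assumes "B1 \<inter> C1 = {}" "C1 \<subseteq> {..<n}" "B2 \<inter> C2 = {}" "C2 \<subseteq> {..<n}"
    and eq: "type_ineqs n B1 C1 u1 = type_ineqs n B2 C2 u2"
  shows "B1 = B2 \<and> C1 = C2 \<and> u1 = u2"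
proof -
  have B: "i \<in> B \<longleftrightarrow> Le1 i \<in> type_ineqs n B C u" for i B C u
    by (auto simp: type_ineqs_def)
  have u: "u \<longleftrightarrow> SumLe \<in> type_ineqs n B C u" for B C u
    by (auto simp: type_ineqs_def)
  have C: "i \<in> C \<longleftrightarrow> i < n \<and> i \<notin> B \<and> Ge0 i \<notin> type_ineqs n B C u"
    if "B \<inter> C = {}" "C \<subseteq> {..<n}" for i B C u
    using that by (auto simp: type_ineqs_def)
  have "B1 = B2"
    using eq B by blast
  moreover have "C1 = C2"
    using eq C[OF assms(1,2)] C[OF assms(3,4)] \<open>B1 = B2\<close> by blast
  moreover have "u1 = u2"
    using eq u by blast
  ultimately show ?thesis
    by simp
qed

lemma inj_on_type_face:
  assumes "1 \<le> j"
  shows "inj_on (type_face n k) (face_types n k j)"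
proof -
  have subset: "type_ineqs n B2 C2 u2 \<subseteq> type_ineqs n B1 C1 u1"
    if R1: "(B1, C1, u1) \<in> face_types n k j"
      and eq: "type_face n k (B1, C1, u1) = type_face n k (B2, C2, u2)" for B1 C1 u1 B2 C2 u2
  proof -
    note z = type_point_realizes[OF R1 assms]
    have "type_point k B1 C1 u1 \<in> type_face n k (B1, C1, u1)"
      using z by (simp add: type_face_def ineq_face_iff hypersimplex_ho_tight)
    then have "type_point k B1 C1 u1 \<in> ineq_face n k (type_ineqs n B2 C2 u2)"
      using eq unfolding type_face_def by (simp, blast)
    then show ?thesis
      using z by (simp add: ineq_face_iff)
  qed
  show ?thesis
  proof (rule inj_onI)
    fix p q
    assume "p \<in> face_types n k j" "q \<in> face_types n k j" "type_face n k p = type_face n k q"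
    moreover obtain B1 C1 u1 B2 C2 u2 where pq: "p = (B1, C1, u1)" "q = (B2, C2, u2)"
      by (metis prod_cases3)
    ultimately have R: "(B1, C1, u1) \<in> face_types n k j" "(B2, C2, u2) \<in> face_types n k j"
      and eq: "type_face n k (B1, C1, u1) = type_face n k (B2, C2, u2)"
      by simp_all
    have "type_ineqs n B1 C1 u1 = type_ineqs n B2 C2 u2"
      using subset[OF R(1) eq] subset[OF R(2) eq[symmetric]] by blast
    moreover have "B1 \<inter> C1 = {}" "C1 \<subseteq> {..<n}" "B2 \<inter> C2 = {}" "C2 \<subseteq> {..<n}"
      using R by (auto simp: face_types_def)
    ultimately show "p = q"
      using type_ineqs_inj pq by blast
  qed
qed

lemma tight_ineqs_eq_type_ineqs:
  assumes zP: "z \<in> hypersimplex n k" and "SumGe \<notin> tight_ineqs n k z"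
  shows "tight_ineqs n k z =
    type_ineqs n {i. i < n \<and> z i = 1} (fractional_coords n z) (SumLe \<in> tight_ineqs n k z)"
proof (rule set_eqI)
  fix l
  have z01: "0 \<le> z i" "z i \<le> 1" if "i < n" for i
    using zP that by (auto simp: hypersimplex_def)
  show "l \<in> tight_ineqs n k z \<longleftrightarrow>
      l \<in> type_ineqs n {i. i < n \<and> z i = 1} (fractional_coords n z) (SumLe \<in> tight_ineqs n k z)"
  proof (cases l)
    case (Ge0 i)
    have "i < n \<Longrightarrow> z i = 0 \<longleftrightarrow> z i \<noteq> 1 \<and> \<not> (0 < z i \<and> z i < 1)"
      using z01[of i] by auto
    then show ?thesis
      using Ge0 unfolding tight_ineqs_def hs_ineqs_def type_ineqs_def fractional_coords_def by auto
  qed (use assms in \<open>auto simp: tight_ineqs_def hs_ineqs_def type_ineqs_def fractional_coords_def\<close>)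
qed

lemma point_type_in_face_types:
  assumes zP: "z \<in> hypersimplex n k" and off_bottom: "SumGe \<notin> tight_ineqs n k z" and "1 \<le> j"
    and dim: "aff_dim_pt (ineq_face n k (tight_ineqs n k z)) = int j"
  shows "({i. i < n \<and> z i = 1}, fractional_coords n z, SumLe \<in> tight_ineqs n k z) \<in> face_types n k j"
proof -
  define B where "B = {i. i < n \<and> z i = 1}"
  define C where "C = fractional_coords n z"
  have z01: "0 \<le> z i" "z i \<le> 1" if "i < n" for i
    using zP that by (auto simp: hypersimplex_def)
  have BC: "B \<subseteq> {..<n}" "C \<subseteq> {..<n}" "B \<inter> C = {}"
    by (auto simp: B_def C_def fractional_coords_def)
  have card_C: "int j = int (if SumLe \<in> tight_ineqs n k z then card C - 1 else card C)"
    using aff_dim_ineq_face[OF zP off_bottom] dim by (simp add: C_def)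
  then have "C \<noteq> {}"
    using \<open>1 \<le> j\<close> by (auto split: if_splits)
  have z_sum: "(\<Sum>i<n. z i) = real (card B) + (\<Sum>i\<in>C. z i)"
  proof -
    have "(\<Sum>i<n. z i) = (\<Sum>i<n. (if i \<in> B then 1 else 0) + (if i \<in> C then z i else 0))"
    proof (rule sum.cong[OF refl])
      fix i
      assume "i \<in> {..<n}"
      then have "z i = 0 \<or> i \<in> B \<or> i \<in> C"
        using z01[of i] by (auto simp: B_def C_def fractional_coords_def)
      then show "z i = (if i \<in> B then 1 else 0) + (if i \<in> C then z i else 0)"
        by (auto simp: B_def C_def fractional_coords_def)
    qed
    also have "\<dots> = real (card B) + (\<Sum>i\<in>C. z i)"
      by (rule sum_indicator_split[OF BC])
    finally show ?thesis .
  qed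
  have C_sum: "0 < (\<Sum>i\<in>C. z i)" "(\<Sum>i\<in>C. z i) < real (card C)"
  proof -
    show "0 < (\<Sum>i\<in>C. z i)"
      using \<open>C \<noteq> {}\<close> by (intro sum_pos) (auto simp: C_def fractional_coords_def)
    have "(\<Sum>i\<in>C. z i) < (\<Sum>i\<in>C. 1)"
      using \<open>C \<noteq> {}\<close> by (intro sum_strict_mono) (auto simp: C_def fractional_coords_def)
    then show "(\<Sum>i\<in>C. z i) < real (card C)"
      by simp
  qed
  have "real k - 1 < (\<Sum>i<n. z i)" "(\<Sum>i<n. z i) \<le> real k"
    using zP off_bottom by (auto simp: hypersimplex_def SumGe_tight_iff)
  then have "(B, C, SumLe \<in> tight_ineqs n k z) \<in> face_types n k j"
    using BC card_C z_sum C_sum \<open>C \<noteq> {}\<close>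
    by (auto simp: face_types_def SumLe_tight_iff card_gt_0_iff)
  then show ?thesis
    by (simp add: B_def C_def)
qed

lemma ho_face_has_type:
  assumes F: "is_face F (hypersimplex n k)" and "aff_dim_pt F = int j" "1 \<le> j"
    and meets: "F \<inter> hypersimplex_ho n k \<noteq> {}"
  shows "F \<inter> hypersimplex_ho n k \<in> type_face n k ` face_types n k j"
proof -
  obtain z where z: "z \<in> F" and z_least: "\<And>x. x \<in> F \<Longrightarrow> tight_ineqs n k z \<subseteq> tight_ineqs n k x"
    using face_least_tight_point[OF F] meets by blast
  have F_eq: "F = ineq_face n k (tight_ineqs n k z)"
    by (rule face_eq_ineq_face[OF F z z_least])
  have zP: "z \<in> hypersimplex n k"
    using z F by (auto simp: is_face_def)
  have off_bottom: "SumGe \<notin> tight_ineqs n k z"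
    using meets z_least by (auto simp: hypersimplex_ho_tight)
  have "({i. i < n \<and> z i = 1}, fractional_coords n z, SumLe \<in> tight_ineqs n k z) \<in> face_types n k j"
    using point_type_in_face_types[OF zP off_bottom] assms F_eq by simp
  moreover have "F \<inter> hypersimplex_ho n k =
      type_face n k ({i. i < n \<and> z i = 1}, fractional_coords n z, SumLe \<in> tight_ineqs n k z)"
    using F_eq tight_ineqs_eq_type_ineqs[OF zP off_bottom] by (simp add: type_face_def)
  ultimately show ?thesis
    by blast
qed

lemma type_face_is_ho_face:
  assumes R: "(B, C, u) \<in> face_types n k j" and "1 \<le> j"
  obtains F where "is_face F (hypersimplex n k)" "aff_dim_pt F = int j"
    "type_face n k (B, C, u) = F \<inter> hypersimplex_ho n k" "F \<inter> hypersimplex_ho n k \<noteq> {}"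
proof -
  define z where "z = type_point k B C u"
  note z = type_point_realizes[OF assms, folded z_def]
  define F where "F = ineq_face n k (tight_ineqs n k z)"
  have "SumLe \<in> tight_ineqs n k z \<longleftrightarrow> u"
    unfolding z(2) by (auto simp: type_ineqs_def)
  then have "aff_dim_pt F = int (if u then card C - 1 else card C)"
    using aff_dim_ineq_face[OF z(1,3)] by (simp add: F_def z(4))
  also have "\<dots> = int j"
    using R by (auto simp: face_types_def split: if_splits)
  finally have "aff_dim_pt F = int j" .
  moreover have "type_face n k (B, C, u) = F \<inter> hypersimplex_ho n k"
    by (simp add: F_def z(2) type_face_def)
  moreover have "z \<in> F \<inter> hypersimplex_ho n k"
    using z by (simp add: F_def ineq_face_iff hypersimplex_ho_tight)
  ultimately show ?thesis
    using that[OF is_face_ineq_face[of n k "tight_ineqs n k z", folded F_def]] by blast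
qed

lemma f_ho_eq_card_face_types:
  assumes "1 \<le> j"
  shows "f_ho j n k = card (face_types n k j)"
proof -
  have "{G. \<exists>F. is_face F (hypersimplex n k) \<and> aff_dim_pt F = int j \<and>
      G = F \<inter> hypersimplex_ho n k \<and> G \<noteq> {}} = type_face n k ` face_types n k j"
  proof (intro set_eqI iffI)
    fix G
    assume "G \<in> {G. \<exists>F. is_face F (hypersimplex n k) \<and> aff_dim_pt F = int j \<and>
      G = F \<inter> hypersimplex_ho n k \<and> G \<noteq> {}}"
    then show "G \<in> type_face n k ` face_types n k j"
      using ho_face_has_type[OF _ _ assms] by blast
  next
    fix G
    assume "G \<in> type_face n k ` face_types n k j"
    then obtain B C u where R: "(B, C, u) \<in> face_types n k j" and G: "G = type_face n k (B, C, u)"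
      by auto
    obtain F where "is_face F (hypersimplex n k)" "aff_dim_pt F = int j"
      "type_face n k (B, C, u) = F \<inter> hypersimplex_ho n k" "F \<inter> hypersimplex_ho n k \<noteq> {}"
      using type_face_is_ho_face[OF R assms] .
    then show "G \<in> {G. \<exists>F. is_face F (hypersimplex n k) \<and> aff_dim_pt F = int j \<and>
      G = F \<inter> hypersimplex_ho n k \<and> G \<noteq> {}}"
      unfolding G by blast
  qed
  then show ?thesis
    unfolding f_ho_def using inj_on_type_face[OF assms] by (simp add: card_image)
qed

definition disjoint_pairs :: "nat \<Rightarrow> nat \<Rightarrow> nat \<Rightarrow> (nat set \<times> nat set) set" where
  "disjoint_pairs n b c =
     {(B, C). B \<subseteq> {..<n} \<and> C \<subseteq> {..<n} \<and> B \<inter> C = {} \<and> card B = b \<and> card C = c}"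

lemma card_disjoint_pairs: "card (disjoint_pairs n b c) = (n choose c) * ((n - c) choose b)"
proof -
  define A where "A = {C. C \<subseteq> {..<n} \<and> card C = c}"
  define S where "S = (SIGMA C:A. {B. B \<subseteq> {..<n} - C \<and> card B = b})"
  have pairs: "disjoint_pairs n b c = (\<lambda>(C, B). (B, C)) ` S"
    unfolding disjoint_pairs_def S_def A_def by (auto simp: image_iff)
  have "finite A"
    unfolding A_def by (rule finite_subset[of _ "Pow {..<n}"]) auto
  then have "card S = (\<Sum>C\<in>A. card {B. B \<subseteq> {..<n} - C \<and> card B = b})"
    unfolding S_def by (intro card_SigmaI) auto
  also have "\<dots> = (\<Sum>C\<in>A. (n - c) choose b)"
  proof (rule sum.cong[OF refl])
    fix C
    assume "C \<in> A"
    then have "card ({..<n} - C) = n - c"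
      unfolding A_def by (subst card_Diff_subset) (auto intro: finite_subset)
    then show "card {B. B \<subseteq> {..<n} - C \<and> card B = b} = (n - c) choose b"
      using n_subsets[of "{..<n} - C" b] by simp
  qed
  also have "\<dots> = (n choose c) * ((n - c) choose b)"
    using n_subsets[of "{..<n}" c] by (simp add: A_def)
  finally show ?thesis
    unfolding pairs by (subst card_image) (auto simp: inj_on_def)
qed

lemma finite_disjoint_pairs: "finite (disjoint_pairs n b c)"
  by (rule finite_subset[of _ "Pow {..<n} \<times> Pow {..<n}"]) (auto simp: disjoint_pairs_def)

lemma card_UN_disjoint_pairs:
  "card (\<Union>b\<in>{p..q}. disjoint_pairs n b c) = (\<Sum>b\<in>{p..q}. (n choose c) * ((n - c) choose b))"
proof -
  have "card (\<Union>b\<in>{p..q}. disjoint_pairs n b c) = (\<Sum>b\<in>{p..q}. card (disjoint_pairs n b c))"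
    by (rule card_UN_disjoint) (simp_all add: finite_disjoint_pairs, auto simp: disjoint_pairs_def)
  then show ?thesis
    by (simp add: card_disjoint_pairs)
qed

lemma card_face_types:
  assumes "1 \<le> k"
  shows "card (face_types n k j) = (\<Sum>b\<in>{k - j..k - 1}. (n choose j) * ((n - j) choose b))
      + (\<Sum>b\<in>{k - j..k - 1}. (n choose (j + 1)) * ((n - (j + 1)) choose b))"
proof -
  define P1 where "P1 = (\<Union>b\<in>{k - j..k - 1}. disjoint_pairs n b j)"
  define P2 where "P2 = (\<Union>b\<in>{k - j..k - 1}. disjoint_pairs n b (j + 1))"
  have "face_types n k j = (\<lambda>(B, C). (B, C, False)) ` P1 \<union> (\<lambda>(B, C). (B, C, True)) ` P2"
  proof (rule set_eqI)
    fix x :: "nat set \<times> nat set \<times> bool"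
    obtain B C u where x: "x = (B, C, u)"
      by (cases x) auto
    show "x \<in> face_types n k j \<longleftrightarrow> x \<in> (\<lambda>(B, C). (B, C, False)) ` P1 \<union> (\<lambda>(B, C). (B, C, True)) ` P2"
      unfolding x using assms
      by (cases u) (auto simp: face_types_def P1_def P2_def disjoint_pairs_def image_iff)
  qed
  moreover have "finite P1" "finite P2"
    unfolding P1_def P2_def by (auto simp: finite_disjoint_pairs)
  ultimately have "card (face_types n k j)
      = card ((\<lambda>(B, C). (B, C, False)) ` P1) + card ((\<lambda>(B, C). (B, C, True)) ` P2)"
    by (auto intro: card_Un_disjoint)
  also have "\<dots> = card P1 + card P2"
    by (subst (1 2) card_image) (auto simp: inj_on_def)
  finally show ?thesis
    unfolding P1_def P2_def card_UN_disjoint_pairs .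
qed

lemma sum_int_interval_nat:
  fixes f :: "int \<Rightarrow> 'a::comm_monoid_add"
  assumes "1 \<le> k" and zero: "\<And>b. b < 0 \<Longrightarrow> f b = 0"
  shows "(\<Sum>b\<in>{int k - int j..int k - 1}. f b) = (\<Sum>b\<in>{k - j..k - 1}. f (int b))"
proof -
  have "(\<Sum>b\<in>{int k - int j..int k - 1}. f b) = (\<Sum>b\<in>int ` {k - j..k - 1}. f b)"
  proof (rule sum.mono_neutral_right)
    show "int ` {k - j..k - 1} \<subseteq> {int k - int j..int k - 1}"
      using assms by auto
    show "\<forall>b\<in>{int k - int j..int k - 1} - int ` {k - j..k - 1}. f b = 0"
    proof
      fix b
      assume b: "b \<in> {int k - int j..int k - 1} - int ` {k - j..k - 1}"
      have "b < 0"
      proof (rule ccontr)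
        assume "\<not> b < 0"
        then have "b = int (nat b)" "nat b \<in> {k - j..k - 1}"
          using b by auto
        then show False
          using b by (metis DiffD2 imageI)
      qed
      then show "f b = 0"
        by (rule zero)
    qed
  qed simp
  also have "\<dots> = (\<Sum>b\<in>{k - j..k - 1}. f (int b))"
    by (simp add: sum.reindex)
  finally show ?thesis .
qed

lemma sum_trinomial_int_nat:
  assumes "1 \<le> k"
  shows "(\<Sum>b\<in>{int k - int j..int k - 1}. trinomial_int (int n - int c - b) b (int c))
    = int (\<Sum>b\<in>{k - j..k - 1}. (n choose c) * ((n - c) choose b))"
proof -
  have "(\<Sum>b\<in>{int k - int j..int k - 1}. trinomial_int (int n - int c - b) b (int c))
      = (\<Sum>b\<in>{k - j..k - 1}. trinomial_int (int n - int c - int b) (int b) (int c))"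
    using assms by (intro sum_int_interval_nat) (simp_all add: trinomial_int_def)
  also have "\<dots> = (\<Sum>b\<in>{k - j..k - 1}. int ((n choose c) * ((n - c) choose b)))"
    by (simp only: trinomial_int_binomial)
  finally show ?thesis
    by simp
qed

lemma face_counts_eq_card_face_types:
  assumes "1 \<le> k"
  shows "off_top_count (int k) (int m) (int j) + on_top_count (int k) (int m) (int j)
    = int (card (face_types (k + m) k j))"
proof -
  have "off_top_count (int k) (int m) (int j)
      = int (\<Sum>b\<in>{k - j..k - 1}. ((k + m) choose j) * ((k + m - j) choose b))"
    using sum_trinomial_int_nat[OF assms, where n = "k + m" and c = j]
    by (simp add: off_top_count_def algebra_simps)
  moreover have "on_top_count (int k) (int m) (int j)
      = int (\<Sum>b\<in>{k - j..k - 1}. ((k + m) choose (j + 1)) * ((k + m - (j + 1)) choose b))"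
    using sum_trinomial_int_nat[OF assms, where n = "k + m" and c = "j + 1"]
    by (simp add: on_top_count_def algebra_simps)
  ultimately show ?thesis
    using assms by (simp add: card_face_types)
qed

lemma face_gf_eq_fps3: "face_gf = fps3 (\<lambda>k m j. off_top_count k m j + on_top_count k m j)"
proof (rule fps3_eqI)
  fix k m j
  show "fps_nth (fps_nth (fps_nth face_gf k) m) j
    = fps_nth (fps_nth (fps_nth (fps3 (\<lambda>k m j. off_top_count k m j + on_top_count k m j)) k) m) j"
  proof (cases "1 \<le> k \<and> 1 \<le> j \<and> j \<le> k + m")
    case True
    then show ?thesis
      by (simp add: face_gf_def f_ho_eq_card_face_types face_counts_eq_card_face_types)
  next
    case False
    then consider "k = 0" | "j = 0" | "1 \<le> k" "k + m < j"
      by linarith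
    then have "off_top_count (int k) (int m) (int j) + on_top_count (int k) (int m) (int j) = 0"
    proof cases
      case 1
      then show ?thesis
        unfolding off_top_count_def on_top_count_def by (auto intro!: sum.neutral simp: trinomial_int_def)
    next
      case 2
      then show ?thesis
        unfolding off_top_count_def on_top_count_def by simp
    next
      case 3
      then show ?thesis
        by (simp add: face_counts_eq_card_face_types card_face_types binomial_eq_0)
    qed
    then show ?thesis
      using False by (auto simp: face_gf_def)
  qed
qed

theorem theorem2p1:
  shows "face_gf * ((1 - fps_x - fps_y) * (1 - fps_x - fps_y - fps_x * fps_t)
            * (1 - fps_x - fps_y - fps_y * fps_t))
         = (1 - fps_x) * fps_x * fps_t"
proof -
  have "face_gf * ((1 - fps_x - fps_y) * (1 - fps_x - fps_y - fps_x * fps_t)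
            * (1 - fps_x - fps_y - fps_y * fps_t))
      = face_gf * (1 - fps_x - fps_y) * (1 - fps_x - fps_y - fps_x * fps_t)
            * (1 - fps_x - fps_y - fps_y * fps_t)"
    by (simp only: mult.assoc)
  also have "\<dots> = (1 - fps_x) * (fps3 off_top_count * (1 - fps_x - fps_y - fps_x * fps_t)
            * (1 - fps_x - fps_y - fps_y * fps_t))"
    by (simp only: face_gf_eq_fps3 fps3_face_counts_times mult.assoc)
  also have "\<dots> = (1 - fps_x) * (fps_x * fps_t)"
    by (simp only: fps3_off_top_count_times fps3_off_top_residual_times)
  finally show ?thesis
    by (simp only: mult.assoc)
qed

end
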